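(* Let $M$ be the Fraïssé limit of a Fraïssé class of finite structures in a finite relational language $\mathcal{L}$ whose age has the Strong Amalgamation Property, and let $\tilde{M}$ be its imaginary cover, with $\tilde T=\mathrm{Th}(\tilde M)$. Then $\tilde T$ eliminates the quantifier $\exists^\infty$, and $\mathrm{acl}(X)=X$ for every subset $X$ of every model of $\tilde T$.
   Context: The imaginary cover $\tilde M$ of an $\mathcal{L}$-structure $M$ is the structure in the language $\mathcal{L}'=\mathcal{L}\cup\{E\}$ ($E$ a new binary relation symbol) obtained by replacing each element of $M$ by an infinite $E$-class: e.g. universe $M\times\omega$, $E((m,i),(m',j))$ iff $m=m'$, and each $R\in\mathcal{L}$ interpreted by $R((m_1,i_1),\dots,(m_n,i_n))$ iff $M\models R(m_1,\dots,m_n)$. SAP: for all $A,B,C$ in the class and embeddings $e:A\to B$, $f:A\to C$ there are $D$ and embeddings $g:B\to D$, $h:C\to D$ with $ge=hf$ and $\mathrm{im}(g)\cap\mathrm{im}(h)=\mathrm{im}(ge)$. *)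

theory Defs
  imports Main "HOL-Library.Countable_Set"
begin

text \<open>A relational structure: universe and interpretation of relation symbols
  as predicates on tuples (lists).\<close>
type_synonym ('r, 'a) struc = "'a set \<times> ('r \<Rightarrow> 'a list \<Rightarrow> bool)"

definition univ :: "('r, 'a) struc \<Rightarrow> 'a set" where "univ S = fst S"
definition rel :: "('r, 'a) struc \<Rightarrow> 'r \<Rightarrow> 'a list \<Rightarrow> bool" where "rel S = snd S"

definition wf_struc :: "('r \<Rightarrow> nat) \<Rightarrow> ('r, 'a) struc \<Rightarrow> bool" where
  "wf_struc ar S \<longleftrightarrow> (\<forall>r xs. rel S r xs \<longrightarrow> length xs = ar r \<and> set xs \<subseteq> univ S)"

datatype 'r fm =
    Eq nat nat
  | Rel 'r "nat list"
  | Neg "'r fm"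
  | Conj "'r fm" "'r fm"
  | Ex nat "'r fm"

fun fv :: "'r fm \<Rightarrow> nat set" where
  "fv (Eq i j) = {i, j}"
| "fv (Rel r vs) = set vs"
| "fv (Neg \<phi>) = fv \<phi>"
| "fv (Conj \<phi> \<psi>) = fv \<phi> \<union> fv \<psi>"
| "fv (Ex v \<phi>) = fv \<phi> - {v}"

fun sat :: "('r, 'a) struc \<Rightarrow> (nat \<Rightarrow> 'a) \<Rightarrow> 'r fm \<Rightarrow> bool" where
  "sat S e (Eq i j) = (e i = e j)"
| "sat S e (Rel r vs) = rel S r (map e vs)"
| "sat S e (Neg \<phi>) = (\<not> sat S e \<phi>)"
| "sat S e (Conj \<phi> \<psi>) = (sat S e \<phi> \<and> sat S e \<psi>)"
| "sat S e (Ex v \<phi>) = (\<exists>a\<in>univ S. sat S (e(v := a)) \<phi>)"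

text \<open>N is a model of Th(M): nonempty, and every sentence true in M is true in N
  (Th(M) is complete, so this is equivalent to elementary equivalence).\<close>
definition model_of_Th :: "('r, 'a) struc \<Rightarrow> ('r, 'b) struc \<Rightarrow> bool" where
  "model_of_Th M N \<longleftrightarrow> univ N \<noteq> {} \<and>
     (\<forall>\<phi> e e'. fv \<phi> = {} \<longrightarrow> sat M e \<phi> \<longrightarrow> sat N e' \<phi>)"

definition acl :: "('r, 'a) struc \<Rightarrow> 'a set \<Rightarrow> 'a set" where
  "acl N X = {a \<in> univ N. \<exists>\<phi> x e. (\<forall>v \<in> fv \<phi> - {x}. e v \<in> X) \<and>
      finite {c \<in> univ N. sat N (e(x := c)) \<phi>} \<and> sat N (e(x := a)) \<phi>}"

text \<open>Th(M) eliminates the quantifier exists-infinity: for each formula \<phi>(x, y) there is a bound n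
  such that every finite instance \<phi>(M, b) has at most n elements.  (For the complete
  theory Th(M) this is equivalent to the uniform bound in all models of Th(M).)\<close>
definition elim_exists_infty :: "('r, 'a) struc \<Rightarrow> bool" where
  "elim_exists_infty M \<longleftrightarrow> (\<forall>\<phi> x. \<exists>n::nat. \<forall>e. (\<forall>v. e v \<in> univ M) \<longrightarrow>
      finite {a \<in> univ M. sat M (e(x := a)) \<phi>} \<longrightarrow>
      card {a \<in> univ M. sat M (e(x := a)) \<phi>} \<le> n)"

definition induced :: "('r, 'a) struc \<Rightarrow> 'a set \<Rightarrow> ('r, 'a) struc" where
  "induced M A = (A, \<lambda>r xs. rel M r xs \<and> set xs \<subseteq> A)"

definition embedding :: "('a \<Rightarrow> 'b) \<Rightarrow> ('r, 'a) struc \<Rightarrow> ('r, 'b) struc \<Rightarrow> bool" where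
  "embedding f A B \<longleftrightarrow> inj_on f (univ A) \<and> f ` univ A \<subseteq> univ B \<and>
     (\<forall>r xs. set xs \<subseteq> univ A \<longrightarrow> (rel A r xs \<longleftrightarrow> rel B r (map f xs)))"

definition isomorphism :: "('a \<Rightarrow> 'b) \<Rightarrow> ('r, 'a) struc \<Rightarrow> ('r, 'b) struc \<Rightarrow> bool" where
  "isomorphism f A B \<longleftrightarrow> embedding f A B \<and> f ` univ A = univ B"

definition ultrahomogeneous :: "('r, 'a) struc \<Rightarrow> bool" where
  "ultrahomogeneous M \<longleftrightarrow> (\<forall>A B f. A \<subseteq> univ M \<longrightarrow> B \<subseteq> univ M \<longrightarrow> finite A \<longrightarrow>
     isomorphism f (induced M A) (induced M B) \<longrightarrow>
     (\<exists>g. isomorphism g M M \<and> (\<forall>a\<in>A. g a = f a)))"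

text \<open>Since the age is the class of
  finite structures embeddable in M (closed under isomorphism), it suffices to take
  finite substructures of M as representatives of A, B, C, D.\<close>
definition age_SAP :: "('r, 'a) struc \<Rightarrow> bool" where
  "age_SAP M \<longleftrightarrow> (\<forall>A B C e f.
     A \<subseteq> univ M \<longrightarrow> B \<subseteq> univ M \<longrightarrow> C \<subseteq> univ M \<longrightarrow> finite A \<longrightarrow> finite B \<longrightarrow> finite C \<longrightarrow>
     embedding e (induced M A) (induced M B) \<longrightarrow> embedding f (induced M A) (induced M C) \<longrightarrow>
     (\<exists>D g h. D \<subseteq> univ M \<and> finite D \<and>
        embedding g (induced M B) (induced M D) \<and> embedding h (induced M C) (induced M D) \<and>
        (\<forall>a\<in>A. g (e a) = h (f a)) \<and>
        g ` B \<inter> h ` C = (g \<circ> e) ` A))"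

text \<open>M is the Fraisse limit of a Fraisse class (namely its age): M is countable and
  ultrahomogeneous (Fraisse's theorem).\<close>
definition fraisse_limit :: "('r, 'a) struc \<Rightarrow> bool" where
  "fraisse_limit M \<longleftrightarrow> univ M \<noteq> {} \<and> countable (univ M) \<and> ultrahomogeneous M"

text \<open>Language L' = L \<union> {E}: the symbol None is E, Some r is r.\<close>
definition ar_cover :: "('r \<Rightarrow> nat) \<Rightarrow> 'r option \<Rightarrow> nat" where
  "ar_cover ar s = (case s of None \<Rightarrow> 2 | Some r \<Rightarrow> ar r)"

definition imag_cover :: "('r, 'a) struc \<Rightarrow> ('r option, 'a \<times> nat) struc" where
  "imag_cover M = (univ M \<times> UNIV,
     \<lambda>s xs. set xs \<subseteq> univ M \<times> UNIV \<and>
       (case s of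
          None \<Rightarrow> (\<exists>x y. xs = [x, y] \<and> fst x = fst y)
        | Some r \<Rightarrow> rel M r (map fst xs)))"

end

(* Transposing two elements of one E-class is an automorphism of the imaginary cover. Hence if a
   satisfies phi(x, p) and is not among the parameters p, then so does every element of the E-class
   of a outside p: a finite solution set of phi(x, p) lies inside p, which bounds its size by the
   number of free variables of phi, and no element outside X is algebraic over X. For each k,
   "whenever phi(x, p) has a solution outside p it has k solutions" is a first-order sentence; it
   holds in the cover, hence in every model of its theory, where it again forces acl(X) = X. *)

theory Submission
  imports Defs "HOL-Combinatorics.Transposition"
begin

lemma finite_fv: "finite (fv \<phi>)"
  by (induction \<phi>) simp_all

lemma sat_cong: "(\<And>v. v \<in> fv \<phi> \<Longrightarrow> e v = e' v) \<Longrightarrow> sat S e \<phi> \<longleftrightarrow> sat S e' \<phi>"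
proof (induction \<phi> arbitrary: e e')
  case (Rel r vs)
  then have "map e vs = map e' vs" by simp
  then show ?case by (simp only: sat.simps)
next
  case (Neg \<phi>)
  then show ?case by (metis fv.simps(3) sat.simps(3))
next
  case (Conj \<phi> \<psi>)
  then show ?case by (metis UnCI fv.simps(4) sat.simps(4))
next
  case (Ex v \<phi>)
  have "sat S (e(v := a)) \<phi> \<longleftrightarrow> sat S (e'(v := a)) \<phi>" for a
    by (rule Ex.IH) (use Ex.prems in auto)
  then show ?case by simp
qed simp

definition Truth :: "'r fm" where
  "Truth = Neg (Ex 0 (Neg (Eq 0 0)))"

definition Conjs :: "'r fm list \<Rightarrow> 'r fm" where
  "Conjs \<psi>s = foldr Conj \<psi>s Truth"

fun Exs :: "nat list \<Rightarrow> 'r fm \<Rightarrow> 'r fm" where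
  "Exs [] \<psi> = \<psi>"
| "Exs (v # vs) \<psi> = Ex v (Exs vs \<psi>)"

definition Distinct :: "nat list \<Rightarrow> 'r fm" where
  "Distinct vs = Conjs [Neg (Eq u v). u \<leftarrow> vs, v \<leftarrow> vs, u \<noteq> v]"

definition Inst :: "'r fm \<Rightarrow> nat \<Rightarrow> nat \<Rightarrow> 'r fm" where
  "Inst \<phi> x z = Ex x (Conj (Eq x z) \<phi>)"

lemma sat_Truth [simp]: "sat S e Truth"
  by (simp add: Truth_def)

lemma fv_Truth [simp]: "fv Truth = {}"
  by (simp add: Truth_def)

lemma sat_Conjs [simp]: "sat S e (Conjs \<psi>s) \<longleftrightarrow> (\<forall>\<psi> \<in> set \<psi>s. sat S e \<psi>)"
  by (induction \<psi>s) (simp_all add: Conjs_def)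

lemma fv_Conjs [simp]: "fv (Conjs \<psi>s) = (\<Union>\<psi> \<in> set \<psi>s. fv \<psi>)"
  by (induction \<psi>s) (simp_all add: Conjs_def)

lemma fv_Exs [simp]: "fv (Exs vs \<psi>) = fv \<psi> - set vs"
  by (induction vs) auto

lemma sat_Exs:
  "sat S e (Exs vs \<psi>) \<longleftrightarrow> (\<exists>h. h ` set vs \<subseteq> univ S \<and> sat S (override_on e h (set vs)) \<psi>)"
proof (induction vs arbitrary: e)
  case (Cons v vs)
  let ?A = "set vs"
  have "sat S e (Exs (v # vs) \<psi>) \<longleftrightarrow>
      (\<exists>a \<in> univ S. \<exists>h. h ` ?A \<subseteq> univ S \<and> sat S (override_on (e(v := a)) h ?A) \<psi>)"
    by (simp only: Exs.simps sat.simps Cons.IH)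
  also have "\<dots> \<longleftrightarrow> (\<exists>h. h ` insert v ?A \<subseteq> univ S \<and> sat S (override_on e h (insert v ?A)) \<psi>)"
  proof
    assume "\<exists>a \<in> univ S. \<exists>h. h ` ?A \<subseteq> univ S \<and> sat S (override_on (e(v := a)) h ?A) \<psi>"
    then obtain a h where "a \<in> univ S" "h ` ?A \<subseteq> univ S" "sat S (override_on (e(v := a)) h ?A) \<psi>"
      by blast
    moreover define h' where "h' = (if v \<in> ?A then h else h(v := a))"
    moreover have "override_on (e(v := a)) h ?A = override_on e h' (insert v ?A)"
      by (auto simp: h'_def override_on_def)
    ultimately show "\<exists>h. h ` insert v ?A \<subseteq> univ S \<and> sat S (override_on e h (insert v ?A)) \<psi>"
      by (intro exI[of _ h']) auto
  next
    assume "\<exists>h. h ` insert v ?A \<subseteq> univ S \<and> sat S (override_on e h (insert v ?A)) \<psi>"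
    then obtain h where "h ` insert v ?A \<subseteq> univ S" "sat S (override_on e h (insert v ?A)) \<psi>"
      by blast
    moreover have "override_on (e(v := h v)) h ?A = override_on e h (insert v ?A)"
      by (auto simp: override_on_def)
    ultimately show "\<exists>a \<in> univ S. \<exists>h. h ` ?A \<subseteq> univ S \<and> sat S (override_on (e(v := a)) h ?A) \<psi>"
      by (intro bexI[of _ "h v"] exI[of _ h]) auto
  qed
  finally show ?case
    by simp
qed simp

lemma sat_Distinct [simp]: "sat S e (Distinct vs) \<longleftrightarrow> inj_on e (set vs)"
  by (auto simp: Distinct_def inj_on_def)

lemma fv_Distinct: "fv (Distinct vs) \<subseteq> set vs"
  by (auto simp: Distinct_def)

lemma sat_Inst [simp]: "z \<noteq> x \<Longrightarrow> sat S e (Inst \<phi> x z) \<longleftrightarrow> e z \<in> univ S \<and> sat S (e(x := e z)) \<phi>"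
  by (auto simp: Inst_def)

lemma fv_Inst: "fv (Inst \<phi> x z) \<subseteq> insert z (fv \<phi> - {x})"
  by (auto simp: Inst_def)

abbreviation solutions :: "('r, 'a) struc \<Rightarrow> (nat \<Rightarrow> 'a) \<Rightarrow> nat \<Rightarrow> 'r fm \<Rightarrow> 'a set" where
  "solutions S e x \<phi> \<equiv> {a \<in> univ S. sat S (e(x := a)) \<phi>}"

definition At_least :: "'r fm \<Rightarrow> nat \<Rightarrow> nat list \<Rightarrow> 'r fm" where
  "At_least \<phi> x zs = Exs zs (Conj (Distinct zs) (Conjs (map (Inst \<phi> x) zs)))"

lemma fv_At_least: "fv (At_least \<phi> x zs) \<subseteq> fv \<phi> - {x}"
  using fv_Distinct[of zs] fv_Inst[of \<phi> x] by (fastforce simp: At_least_def)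

lemma sat_At_least:
  assumes "distinct zs" and "set zs \<inter> insert x (fv \<phi>) = {}"
  shows "sat S e (At_least \<phi> x zs) \<longleftrightarrow> (\<exists>B \<subseteq> solutions S e x \<phi>. finite B \<and> card B = length zs)"
proof -
  let ?Z = "set zs"
  have inst: "sat S (override_on e h ?Z) (Inst \<phi> x z) \<longleftrightarrow> h z \<in> solutions S e x \<phi>"
    if "z \<in> ?Z" for h z
  proof -
    have "z \<noteq> x"
      using that assms(2) by auto
    moreover have "sat S ((override_on e h ?Z)(x := h z)) \<phi> \<longleftrightarrow> sat S (e(x := h z)) \<phi>"
      by (rule sat_cong) (use assms(2) in \<open>auto simp: override_on_def\<close>)
    ultimately show ?thesis
      using that by simp
  qed
  have inj: "inj_on (override_on e h ?Z) ?Z \<longleftrightarrow> inj_on h ?Z" for h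
    by (rule inj_on_cong) simp
  have body: "sat S (override_on e h ?Z) (Conj (Distinct zs) (Conjs (map (Inst \<phi> x) zs))) \<longleftrightarrow>
      inj_on h ?Z \<and> h ` ?Z \<subseteq> solutions S e x \<phi>" for h
    using inst[of _ h] by (auto simp: inj image_subset_iff)
  have "sat S e (At_least \<phi> x zs) \<longleftrightarrow> (\<exists>h. inj_on h ?Z \<and> h ` ?Z \<subseteq> solutions S e x \<phi>)"
    unfolding At_least_def sat_Exs body by blast
  also have "\<dots> \<longleftrightarrow> (\<exists>B \<subseteq> solutions S e x \<phi>. finite B \<and> card B = length zs)"
  proof
    assume "\<exists>h. inj_on h ?Z \<and> h ` ?Z \<subseteq> solutions S e x \<phi>"
    then obtain h where "inj_on h ?Z" and sub: "h ` ?Z \<subseteq> solutions S e x \<phi>"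
      by blast
    then have "card (h ` ?Z) = length zs"
      by (simp add: card_image distinct_card assms(1))
    then show "\<exists>B \<subseteq> solutions S e x \<phi>. finite B \<and> card B = length zs"
      using sub finite_imageI[OF finite_set] by blast
  next
    assume "\<exists>B \<subseteq> solutions S e x \<phi>. finite B \<and> card B = length zs"
    then obtain B where B: "B \<subseteq> solutions S e x \<phi>" "finite B" "card B = length zs"
      by blast
    then have card_eq: "card ?Z = card B"
      by (simp add: distinct_card assms(1))
    obtain h where "bij_betw h ?Z B"
      using finite_same_card_bij[OF finite_set B(2) card_eq] by blast
    then show "\<exists>h. inj_on h ?Z \<and> h ` ?Z \<subseteq> solutions S e x \<phi>"
      using B(1) by (auto simp: bij_betw_def)
  qed
  finally show ?thesis .
qed

definition Many_solutions :: "'r fm \<Rightarrow> nat \<Rightarrow> nat \<Rightarrow> 'r fm" where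
  "Many_solutions \<phi> x k =
    (let ps = sorted_list_of_set (fv \<phi> - {x}); z\<^sub>0 = Suc (Max (insert x (fv \<phi>)))
     in Neg (Exs ps (Conj (Ex x (Conj \<phi> (Conjs [Neg (Eq x p). p \<leftarrow> ps])))
                          (Neg (At_least \<phi> x [z\<^sub>0..<z\<^sub>0 + k])))))"

lemma fv_Many_solutions [simp]: "fv (Many_solutions \<phi> x k) = {}"
  using fv_At_least[of \<phi> x] by (auto simp: Many_solutions_def Let_def finite_fv)

lemma sat_Many_solutions:
  "sat S e (Many_solutions \<phi> x k) \<longleftrightarrow>
    (\<forall>h. h ` (fv \<phi> - {x}) \<subseteq> univ S \<longrightarrow>
      (\<exists>a \<in> univ S - h ` (fv \<phi> - {x}). sat S (h(x := a)) \<phi>) \<longrightarrow>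
      (\<exists>B \<subseteq> solutions S h x \<phi>. finite B \<and> card B = k))"
  (is "_ \<longleftrightarrow> ?rhs")
proof -
  define P where "P = fv \<phi> - {x}"
  define z\<^sub>0 where "z\<^sub>0 = Suc (Max (insert x (fv \<phi>)))"
  have "\<forall>v \<in> insert x (fv \<phi>). v < z\<^sub>0"
    using Max_ge[of "insert x (fv \<phi>)"] by (simp add: z\<^sub>0_def finite_fv less_Suc_eq_le)
  then have zs: "distinct [z\<^sub>0..<z\<^sub>0 + k]" "set [z\<^sub>0..<z\<^sub>0 + k] \<inter> insert x (fv \<phi>) = {}"
    by auto
  have agree: "sat S ((override_on e h P)(x := a)) \<phi> \<longleftrightarrow> sat S (h(x := a)) \<phi>" for h a
    by (rule sat_cong) (auto simp: P_def)
  have "sat S e (Many_solutions \<phi> x k) \<longleftrightarrow>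
      \<not> (\<exists>h. h ` P \<subseteq> univ S \<and>
        (\<exists>a \<in> univ S. sat S ((override_on e h P)(x := a)) \<phi> \<and> (\<forall>p \<in> P. a \<noteq> h p)) \<and>
        \<not> (\<exists>B \<subseteq> solutions S (override_on e h P) x \<phi>. finite B \<and> card B = k))"
    unfolding Many_solutions_def Let_def P_def[symmetric] z\<^sub>0_def[symmetric]
    by (simp add: sat_Exs sat_At_least[OF zs] finite_fv P_def)
  also have "\<dots> \<longleftrightarrow> ?rhs"
    unfolding agree P_def[symmetric] Bex_def by auto
  finally show ?thesis .
qed

definition solutions_infinite_off_params :: "('r, 'a) struc \<Rightarrow> bool" where
  "solutions_infinite_off_params S \<longleftrightarrow> (\<forall>\<phi> x e a. e ` (fv \<phi> - {x}) \<subseteq> univ S \<longrightarrow>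
     a \<in> univ S - e ` (fv \<phi> - {x}) \<longrightarrow> sat S (e(x := a)) \<phi> \<longrightarrow> infinite (solutions S e x \<phi>))"

lemma solutions_infinite_off_paramsD:
  assumes "solutions_infinite_off_params S"
    and "e ` (fv \<phi> - {x}) \<subseteq> univ S" and "a \<in> univ S - e ` (fv \<phi> - {x})" and "sat S (e(x := a)) \<phi>"
  shows "infinite (solutions S e x \<phi>)"
  using assms unfolding solutions_infinite_off_params_def by blast

lemma finite_solutions_subset_params:
  assumes "solutions_infinite_off_params S"
    and "e ` (fv \<phi> - {x}) \<subseteq> univ S" and "finite (solutions S e x \<phi>)"
  shows "solutions S e x \<phi> \<subseteq> e ` (fv \<phi> - {x})"
proof
  fix a
  assume a: "a \<in> solutions S e x \<phi>"
  show "a \<in> e ` (fv \<phi> - {x})"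
  proof (rule ccontr)
    assume "a \<notin> e ` (fv \<phi> - {x})"
    with a have "infinite (solutions S e x \<phi>)"
      by (intro solutions_infinite_off_paramsD[OF assms(1,2)]) auto
    with assms(3) show False
      by contradiction
  qed
qed

lemma solutions_infinite_off_params_iff_sat:
  "solutions_infinite_off_params S \<longleftrightarrow> (\<forall>\<phi> x k. sat S e (Many_solutions \<phi> x k))"
proof
  assume inf: "solutions_infinite_off_params S"
  show "\<forall>\<phi> x k. sat S e (Many_solutions \<phi> x k)"
    unfolding sat_Many_solutions
  proof (intro allI impI)
    fix \<phi> x k h
    assume params: "h ` (fv \<phi> - {x}) \<subseteq> univ S"
      and "\<exists>a \<in> univ S - h ` (fv \<phi> - {x}). sat S (h(x := a)) \<phi>"
    then obtain a where "a \<in> univ S - h ` (fv \<phi> - {x})" "sat S (h(x := a)) \<phi>"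
      by blast
    then have "infinite (solutions S h x \<phi>)"
      by (rule solutions_infinite_off_paramsD[OF inf params])
    then obtain B where "finite B" "card B = k" "B \<subseteq> solutions S h x \<phi>"
      by (meson infinite_arbitrarily_large)
    then show "\<exists>B \<subseteq> solutions S h x \<phi>. finite B \<and> card B = k"
      by (intro exI[of _ B]) simp
  qed
next
  assume all: "\<forall>\<phi> x k. sat S e (Many_solutions \<phi> x k)"
  show "solutions_infinite_off_params S"
    unfolding solutions_infinite_off_params_def
  proof (intro allI impI notI)
    fix \<phi> x h a
    assume params: "h ` (fv \<phi> - {x}) \<subseteq> univ S" and a: "a \<in> univ S - h ` (fv \<phi> - {x})"
      and sat_a: "sat S (h(x := a)) \<phi>" and fin: "finite (solutions S h x \<phi>)"
    have "sat S e (Many_solutions \<phi> x (Suc (card (solutions S h x \<phi>))))"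
      using all by simp
    then have "\<exists>B \<subseteq> solutions S h x \<phi>. finite B \<and> card B = Suc (card (solutions S h x \<phi>))"
      using params a sat_a unfolding sat_Many_solutions by blast
    then obtain B where B: "B \<subseteq> solutions S h x \<phi>" "card B = Suc (card (solutions S h x \<phi>))"
      by blast
    have "card B \<le> card (solutions S h x \<phi>)"
      by (rule card_mono[OF fin B(1)])
    with B(2) show False
      by simp
  qed
qed

lemma solutions_infinite_off_params_transfer:
  assumes "model_of_Th M N" and "solutions_infinite_off_params M"
  shows "solutions_infinite_off_params N"
proof -
  have "sat M (\<lambda>_. undefined) (Many_solutions \<phi> x k)" for \<phi> x k
    using assms(2) solutions_infinite_off_params_iff_sat by blast
  then have "sat N (\<lambda>_. undefined) (Many_solutions \<phi> x k)" for \<phi> x k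
    using assms(1) fv_Many_solutions unfolding model_of_Th_def by blast
  then show ?thesis
    using solutions_infinite_off_params_iff_sat by blast
qed

lemma elim_exists_infty_if_solutions_infinite_off_params:
  fixes S :: "('r, 'a) struc"
  assumes "solutions_infinite_off_params S"
  shows "elim_exists_infty S"
  unfolding elim_exists_infty_def
proof (intro allI)
  fix \<phi> :: "'r fm" and x
  let ?P = "fv \<phi> - {x}"
  show "\<exists>n. \<forall>e. (\<forall>v. e v \<in> univ S) \<longrightarrow> finite (solutions S e x \<phi>) \<longrightarrow> card (solutions S e x \<phi>) \<le> n"
  proof (intro exI[of _ "card ?P"] allI impI)
    fix e
    assume "\<forall>v. e v \<in> univ S" and "finite (solutions S e x \<phi>)"
    then have "solutions S e x \<phi> \<subseteq> e ` ?P"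
      by (intro finite_solutions_subset_params[OF assms]) auto
    then have "card (solutions S e x \<phi>) \<le> card (e ` ?P)"
      by (simp add: card_mono finite_fv)
    also have "\<dots> \<le> card ?P"
      by (simp add: card_image_le finite_fv)
    finally show "card (solutions S e x \<phi>) \<le> card ?P" .
  qed
qed

lemma acl_eq_if_solutions_infinite_off_params:
  assumes "solutions_infinite_off_params N" and "X \<subseteq> univ N"
  shows "acl N X = X"
proof
  show "acl N X \<subseteq> X"
  proof
    fix a
    assume "a \<in> acl N X"
    then obtain \<phi> x e where params: "e ` (fv \<phi> - {x}) \<subseteq> X"
      and fin: "finite (solutions N e x \<phi>)" and a: "a \<in> solutions N e x \<phi>"
      by (auto simp: acl_def)
    have "e ` (fv \<phi> - {x}) \<subseteq> univ N"
      using params assms(2) by (rule subset_trans)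
    then have "solutions N e x \<phi> \<subseteq> e ` (fv \<phi> - {x})"
      by (rule finite_solutions_subset_params[OF assms(1) _ fin])
    with a params show "a \<in> X"
      by blast
  qed
  show "X \<subseteq> acl N X"
  proof
    fix a
    assume a: "a \<in> X"
    have "solutions N (\<lambda>_. a) 0 (Eq 0 1) \<subseteq> {a}"
      by auto
    then have "finite (solutions N (\<lambda>_. a) 0 (Eq 0 1))"
      by (rule finite_subset) simp
    then show "a \<in> acl N X"
      using a assms(2) unfolding acl_def
      by (auto intro!: exI[of _ "Eq 0 1"] exI[of _ 0] exI[of _ "\<lambda>_. a"])
  qed
qed

lemma univ_imag_cover [simp]: "univ (imag_cover M) = univ M \<times> UNIV"
  by (simp add: univ_def imag_cover_def)

lemma rel_imag_cover:
  "rel (imag_cover M) s xs \<longleftrightarrow> set xs \<subseteq> univ M \<times> UNIV \<and>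
    (case s of None \<Rightarrow> \<exists>x y. xs = [x, y] \<and> fst x = fst y | Some r \<Rightarrow> rel M r (map fst xs))"
  by (simp add: rel_def imag_cover_def)

lemma rel_imag_cover_map:
  assumes fst_\<pi>: "\<And>p. fst (\<pi> p) = fst p"
  shows "rel (imag_cover M) s (map \<pi> xs) \<longleftrightarrow> rel (imag_cover M) s xs"
proof -
  have E: "(\<exists>x y. map \<pi> xs = [x, y] \<and> fst x = fst y) \<longleftrightarrow> (\<exists>x y. xs = [x, y] \<and> fst x = fst y)"
  proof (cases "length xs = 2")
    case True
    then obtain x y where "xs = [x, y]"
      by (auto simp: length_Suc_conv numeral_2_eq_2)
    then show ?thesis
      by (simp add: fst_\<pi>)
  next
    case False
    then show ?thesis
      by (auto simp: length_Suc_conv numeral_2_eq_2)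
  qed
  have U: "set (map \<pi> xs) \<subseteq> univ M \<times> UNIV \<longleftrightarrow> set xs \<subseteq> univ M \<times> UNIV"
    by (simp add: subset_eq mem_Times_iff fst_\<pi>)
  have F: "map fst (map \<pi> xs) = map fst xs"
    by (simp add: fst_\<pi>)
  show ?thesis
    unfolding rel_imag_cover by (cases s) (simp_all only: E U F option.case)
qed

lemma sat_imag_cover_comp:
  assumes "bij \<pi>" and fst_\<pi>: "\<And>p. fst (\<pi> p) = fst p"
  shows "sat (imag_cover M) (\<pi> \<circ> e) \<phi> \<longleftrightarrow> sat (imag_cover M) e \<phi>"
proof (induction \<phi> arbitrary: e)
  case (Eq i j)
  show ?case
    using bij_is_inj[OF assms(1)] by (simp add: inj_eq)
next
  case (Rel s vs)
  show ?case
    by (simp only: sat.simps map_map[symmetric] rel_imag_cover_map[OF fst_\<pi>])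
next
  case (Ex v \<phi>)
  let ?C = "imag_cover M"
  have U: "\<pi> b \<in> univ M \<times> UNIV \<longleftrightarrow> b \<in> univ M \<times> UNIV" for b
    by (simp add: mem_Times_iff fst_\<pi>)
  have upd: "(\<pi> \<circ> e)(v := \<pi> b) = \<pi> \<circ> e(v := b)" for b
    by auto
  have "(\<exists>a \<in> univ M \<times> UNIV. sat ?C ((\<pi> \<circ> e)(v := a)) \<phi>) \<longleftrightarrow>
      (\<exists>b \<in> univ M \<times> UNIV. sat ?C ((\<pi> \<circ> e)(v := \<pi> b)) \<phi>)"
  proof
    assume "\<exists>a \<in> univ M \<times> UNIV. sat ?C ((\<pi> \<circ> e)(v := a)) \<phi>"
    then obtain a where "a \<in> univ M \<times> UNIV" "sat ?C ((\<pi> \<circ> e)(v := a)) \<phi>"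
      by blast
    moreover obtain b where "a = \<pi> b"
      using bij_is_surj[OF assms(1)] by blast
    ultimately have "b \<in> univ M \<times> UNIV" "sat ?C ((\<pi> \<circ> e)(v := \<pi> b)) \<phi>"
      using U by auto
    then show "\<exists>b \<in> univ M \<times> UNIV. sat ?C ((\<pi> \<circ> e)(v := \<pi> b)) \<phi>"
      by blast
  next
    assume "\<exists>b \<in> univ M \<times> UNIV. sat ?C ((\<pi> \<circ> e)(v := \<pi> b)) \<phi>"
    then show "\<exists>a \<in> univ M \<times> UNIV. sat ?C ((\<pi> \<circ> e)(v := a)) \<phi>"
      using U by blast
  qed
  then show ?case
    by (simp only: sat.simps univ_imag_cover upd Ex.IH)
qed simp_all

lemma solutions_imag_cover_contain_class:
  assumes "a \<in> solutions (imag_cover M) e x \<phi>" and "a \<notin> e ` (fv \<phi> - {x})"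
  shows "{fst a} \<times> UNIV - e ` (fv \<phi> - {x}) \<subseteq> solutions (imag_cover M) e x \<phi>"
proof
  fix q
  assume q: "q \<in> {fst a} \<times> UNIV - e ` (fv \<phi> - {x})"
  let ?\<pi> = "Transposition.transpose a q"
  have "fst q = fst a"
    using q by auto
  then have "fst (?\<pi> p) = fst p" for p
    by (simp add: transpose_def)
  then have "sat (imag_cover M) (?\<pi> \<circ> e(x := a)) \<phi>"
    using assms(1) sat_imag_cover_comp[OF bij_transpose] by blast
  moreover have "e v \<noteq> a" "e v \<noteq> q" if "v \<in> fv \<phi>" "v \<noteq> x" for v
    using assms(2) q that by blast+
  then have "sat (imag_cover M) (?\<pi> \<circ> e(x := a)) \<phi> \<longleftrightarrow> sat (imag_cover M) (e(x := q)) \<phi>"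
    by (intro sat_cong) auto
  ultimately show "q \<in> solutions (imag_cover M) e x \<phi>"
    using assms(1) q by (auto simp: mem_Times_iff)
qed

lemma solutions_infinite_off_params_imag_cover: "solutions_infinite_off_params (imag_cover M)"
  unfolding solutions_infinite_off_params_def
proof (intro allI impI)
  fix \<phi> x e a
  assume "a \<in> univ (imag_cover M) - e ` (fv \<phi> - {x})" "sat (imag_cover M) (e(x := a)) \<phi>"
  then have "{fst a} \<times> UNIV - e ` (fv \<phi> - {x}) \<subseteq> solutions (imag_cover M) e x \<phi>"
    by (intro solutions_imag_cover_contain_class) auto
  moreover have "infinite ({fst a} \<times> (UNIV :: nat set) - e ` (fv \<phi> - {x}))"
    by (simp add: Diff_infinite_finite finite_fv finite_cartesian_product_iff)
  ultimately show "infinite (solutions (imag_cover M) e x \<phi>)"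
    using finite_subset by blast
qed

theorem mainTheorem8:
  fixes ar :: "'r::finite \<Rightarrow> nat"
    and M :: "('r, 'a) struc"
  assumes "wf_struc ar M"
    and "fraisse_limit M"
    and "age_SAP M"
  shows "elim_exists_infty (imag_cover M) \<and>
    (\<forall>(N :: ('r option, 'b) struc) X.
        wf_struc (ar_cover ar) N \<longrightarrow> model_of_Th (imag_cover M) N \<longrightarrow>
        X \<subseteq> univ N \<longrightarrow> acl N X = X)"
proof -
  have cover: "solutions_infinite_off_params (imag_cover M)"
    by (rule solutions_infinite_off_params_imag_cover)
  have "acl N X = X" if "model_of_Th (imag_cover M) N" and "X \<subseteq> univ N"
    for N :: "('r option, 'b) struc" and X
    using solutions_infinite_off_params_transfer[OF that(1) cover] that(2)
    by (rule acl_eq_if_solutions_infinite_off_params)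
  then show ?thesis
    using elim_exists_infty_if_solutions_infinite_off_params[OF cover] by blast
qed

end
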